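(* Let $(A_i,\gamma_i)_{i\in I}$, with $I\neq\varnothing$, be a family of non-trivial quasiordered sets, i.e. $\Delta_{A_i}\neq\gamma_i\neq A_i\times A_i$ for all $i\in I$. Then the following are equivalent: (1) $\prod_{i\in I}\gamma_i$ is a half-space on $\prod_{i\in I}A_i$; (2) either $|I|=1$ and the single $\gamma_i$ is a half-space, or $|I|=2$ and both $(A_i,\gamma_i)$ are two-element chains.
   Context: A quasiorder on $A$ is a reflexive and transitive relation; $\Delta_A=\{(a,a)\mid a\in A\}$. A quasiorder $\alpha$ on $A$ is a half-space if there is a quasiorder $\beta$ on $A$ with $\alpha\cup\beta=A\times A$ and $\alpha\cap\beta=\Delta_A$. The direct product quasiorder is $\prod_{i\in I}\gamma_i=\{(\underline a,\underline b)\mid \underline a,\underline b\in\prod_{i\in I}A_i,\ (\underline a(i),\underline b(i))\in\gamma_i\text{ for all } i\in I\}$. A two-element chain is a two-element set with a linear order. *)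

theory Defs
  imports "HOL-Library.FuncSet"
begin

definition quasiorder :: "'a set \<Rightarrow> ('a \<times> 'a) set \<Rightarrow> bool" where
  "quasiorder A r \<longleftrightarrow> r \<subseteq> A \<times> A \<and> (\<forall>x\<in>A. (x, x) \<in> r) \<and> trans r"

definition half_space :: "'a set \<Rightarrow> ('a \<times> 'a) set \<Rightarrow> bool" where
  "half_space A \<alpha> \<longleftrightarrow> quasiorder A \<alpha> \<and>
     (\<exists>\<beta>. quasiorder A \<beta> \<and> \<alpha> \<union> \<beta> = A \<times> A \<and> \<alpha> \<inter> \<beta> = Id_on A)"

definition prod_qo :: "'i set \<Rightarrow> ('i \<Rightarrow> 'a set) \<Rightarrow> ('i \<Rightarrow> ('a \<times> 'a) set) \<Rightarrow> (('i \<Rightarrow> 'a) \<times> ('i \<Rightarrow> 'a)) set" where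
  "prod_qo I A \<gamma> = {(a, b). a \<in> PiE I A \<and> b \<in> PiE I A \<and> (\<forall>i\<in>I. (a i, b i) \<in> \<gamma> i)}"

definition two_element_chain :: "'a set \<Rightarrow> ('a \<times> 'a) set \<Rightarrow> bool" where
  "two_element_chain A r \<longleftrightarrow> card A = 2 \<and> quasiorder A r \<and> antisym r \<and>
     (\<forall>x\<in>A. \<forall>y\<in>A. (x, y) \<in> r \<or> (y, x) \<in> r)"

end

theory Submission
  imports Defs
begin

(*
  A quasiorder \<alpha> on A is a half-space exactly when its strict part \<alpha> - Id is cotransitive:
  the only candidate complement is Id_on A \<union> (A \<times> A - \<alpha>), and its transitivity is
  cotransitivity of \<alpha> - Id.  In a product with at least two nontrivial factors, test
  cotransitivity on points that differ from a fixed base point in two or three coordinates: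
  a strict step in one factor combined with an incomparable pair in another shows that every
  factor is total and lies between the ends of each of its strict pairs, hence is a
  two-element chain, and that a third factor is impossible.  Conversely, in a product of two
  two-element chains, at a coordinate where a < c the point b lies between a and c, so the
  other coordinate alone decides whether a \<le> b or b \<le> c.
*)

definition cotransitive_on :: "'a set \<Rightarrow> ('a \<times> 'a) set \<Rightarrow> bool" where
  "cotransitive_on A r \<longleftrightarrow> (\<forall>a\<in>A. \<forall>b\<in>A. \<forall>c\<in>A. (a, c) \<in> r \<longrightarrow> (a, b) \<in> r \<or> (b, c) \<in> r)"

lemma cotransitive_on_image_iff:
  assumes "\<And>x y. x \<in> A \<Longrightarrow> y \<in> A \<Longrightarrow> (f x, f y) \<in> r \<longleftrightarrow> (x, y) \<in> s"
  shows "cotransitive_on (f ` A) r \<longleftrightarrow> cotransitive_on A s"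
  using assms unfolding cotransitive_on_def by auto

lemma half_space_iff_cotransitive_on:
  assumes qo: "quasiorder A \<alpha>"
  shows "half_space A \<alpha> \<longleftrightarrow> cotransitive_on A (\<alpha> - Id)"
proof
  assume "half_space A \<alpha>"
  then obtain \<beta> where \<beta>: "quasiorder A \<beta>" "\<alpha> \<union> \<beta> = A \<times> A" "\<alpha> \<inter> \<beta> = Id_on A"
    unfolding half_space_def by blast
  show "cotransitive_on A (\<alpha> - Id)"
    unfolding cotransitive_on_def
  proof (intro ballI impI)
    fix a b c assume abc: "a \<in> A" "b \<in> A" "c \<in> A" and ac: "(a, c) \<in> \<alpha> - Id"
    show "(a, b) \<in> \<alpha> - Id \<or> (b, c) \<in> \<alpha> - Id"
    proof (rule ccontr)
      assume "\<not> ?thesis"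
      then have "(a, b) \<in> \<beta>" "(b, c) \<in> \<beta>" using \<beta>(2) abc ac by auto
      then have "(a, c) \<in> \<beta>" using \<beta>(1) unfolding quasiorder_def trans_def by blast
      then have "(a, c) \<in> Id_on A" using \<beta>(3) ac by blast
      then show False using ac by auto
    qed
  qed
next
  assume cotrans: "cotransitive_on A (\<alpha> - Id)"
  let ?\<beta> = "Id_on A \<union> (A \<times> A - \<alpha>)"
  have "trans ?\<beta>"
    using cotrans unfolding trans_def cotransitive_on_def by blast
  then have "quasiorder A ?\<beta>" unfolding quasiorder_def by auto
  moreover have "\<alpha> \<union> ?\<beta> = A \<times> A" "\<alpha> \<inter> ?\<beta> = Id_on A"
    using qo unfolding quasiorder_def by auto
  ultimately show "half_space A \<alpha>" using qo unfolding half_space_def by blast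
qed

lemma fun_upd_in_PiE_same: "f \<in> PiE I A \<Longrightarrow> k \<in> I \<Longrightarrow> x \<in> A k \<Longrightarrow> f(k := x) \<in> PiE I A"
  using PiE_fun_upd[of x A k f I] by (simp add: insert_absorb)

lemma quasiorder_prod_qo:
  assumes "\<And>i. i \<in> I \<Longrightarrow> quasiorder (A i) (\<gamma> i)"
  shows "quasiorder (PiE I A) (prod_qo I A \<gamma>)"
  unfolding quasiorder_def
proof (intro conjI)
  show "prod_qo I A \<gamma> \<subseteq> PiE I A \<times> PiE I A" by (auto simp: prod_qo_def)
  show "\<forall>x\<in>PiE I A. (x, x) \<in> prod_qo I A \<gamma>"
    using assms by (auto simp: prod_qo_def quasiorder_def)
  show "trans (prod_qo I A \<gamma>)"
    using assms unfolding trans_def prod_qo_def quasiorder_def by blast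
qed

lemma half_space_prod_qo_singleton:
  assumes qo: "quasiorder (A i) (\<gamma> i)"
  shows "half_space (PiE {i} A) (prod_qo {i} A \<gamma>) \<longleftrightarrow> half_space (A i) (\<gamma> i)"
proof -
  have "PiE {i} A = (\<lambda>x. \<lambda>_\<in>{i}. x) ` A i"
    unfolding PiE_over_singleton_iff UNION_singleton_eq_range ..
  moreover have "cotransitive_on ((\<lambda>x. \<lambda>_\<in>{i}. x) ` A i) (prod_qo {i} A \<gamma> - Id) \<longleftrightarrow>
      cotransitive_on (A i) (\<gamma> i - Id)"
    by (rule cotransitive_on_image_iff) (auto simp: prod_qo_def restrict_def fun_eq_iff split: if_splits)
  moreover have "quasiorder (PiE {i} A) (prod_qo {i} A \<gamma>)"
    using qo by (intro quasiorder_prod_qo) simp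
  ultimately show ?thesis using qo by (simp add: half_space_iff_cotransitive_on)
qed

locale nontrivial_quasiorder_family =
  fixes I :: "'i set" and A :: "'i \<Rightarrow> 'a set" and \<gamma> :: "'i \<Rightarrow> ('a \<times> 'a) set"
  assumes factor_quasiorder: "i \<in> I \<Longrightarrow> quasiorder (A i) (\<gamma> i)"
    and factor_nontrivial: "i \<in> I \<Longrightarrow> Id_on (A i) \<noteq> \<gamma> i \<and> \<gamma> i \<noteq> A i \<times> A i"
begin

lemma factor_refl: "i \<in> I \<Longrightarrow> x \<in> A i \<Longrightarrow> (x, x) \<in> \<gamma> i"
  using factor_quasiorder unfolding quasiorder_def by blast

lemma factor_subset: "i \<in> I \<Longrightarrow> \<gamma> i \<subseteq> A i \<times> A i"
  using factor_quasiorder unfolding quasiorder_def by blast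

lemma factor_trans: "i \<in> I \<Longrightarrow> (x, y) \<in> \<gamma> i \<Longrightarrow> (y, z) \<in> \<gamma> i \<Longrightarrow> (x, z) \<in> \<gamma> i"
  using factor_quasiorder unfolding quasiorder_def trans_def by blast

lemma factor_strict_pair:
  assumes "i \<in> I"
  obtains p q where "(p, q) \<in> \<gamma> i" "p \<noteq> q"
proof -
  have "Id_on (A i) \<subseteq> \<gamma> i" using factor_refl assms by auto
  moreover have "\<gamma> i \<noteq> Id_on (A i)" using factor_nontrivial assms by metis
  ultimately show thesis using that factor_subset[OF assms] by (auto simp: Id_on_iff)
qed

lemma factor_incomparable_pair:
  assumes "i \<in> I"
  obtains p q where "p \<in> A i" "q \<in> A i" "(p, q) \<notin> \<gamma> i"
  using that factor_subset[OF assms] factor_nontrivial[OF assms] by auto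

lemma PiE_nonempty: "PiE I A \<noteq> {}"
  using factor_incomparable_pair by (metis PiE_eq_empty_iff empty_iff)

end

locale half_space_product = nontrivial_quasiorder_family +
  assumes half_space_prod: "half_space (PiE I A) (prod_qo I A \<gamma>)"
begin

lemma prod_cotransitive: "cotransitive_on (PiE I A) (prod_qo I A \<gamma> - Id)"
proof -
  have "quasiorder (PiE I A) (prod_qo I A \<gamma>)" by (rule quasiorder_prod_qo) (rule factor_quasiorder)
  with half_space_prod show ?thesis by (simp add: half_space_iff_cotransitive_on)
qed

lemma two_coordinates_split:
  assumes ij: "i \<in> I" "j \<in> I" "i \<noteq> j"
    and x: "x1 \<in> A i" "x2 \<in> A i" "x3 \<in> A i" and y: "y1 \<in> A j" "y2 \<in> A j" "y3 \<in> A j"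
    and le: "(x1, x3) \<in> \<gamma> i" "(y1, y3) \<in> \<gamma> j" and strict: "x1 \<noteq> x3 \<or> y1 \<noteq> y3"
  shows "(x1, x2) \<in> \<gamma> i \<and> (y1, y2) \<in> \<gamma> j \<or> (x2, x3) \<in> \<gamma> i \<and> (y2, y3) \<in> \<gamma> j"
proof -
  obtain e where e: "e \<in> PiE I A" using PiE_nonempty by blast
  define a where "a = e(i := x1, j := y1)"
  define b where "b = e(i := x2, j := y2)"
  define c where "c = e(i := x3, j := y3)"
  have P: "a \<in> PiE I A" "b \<in> PiE I A" "c \<in> PiE I A"
    unfolding a_def b_def c_def using fun_upd_in_PiE_same e ij x y by metis+
  have "(a, c) \<in> prod_qo I A \<gamma>"
    using P e le ij factor_refl by (auto simp: prod_qo_def a_def c_def PiE_mem)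
  moreover have "a \<noteq> c" using strict ij unfolding a_def c_def by (metis fun_upd_apply)
  ultimately have "(a, c) \<in> prod_qo I A \<gamma> - Id" by blast
  then have "(a, b) \<in> prod_qo I A \<gamma> - Id \<or> (b, c) \<in> prod_qo I A \<gamma> - Id"
    using prod_cotransitive P unfolding cotransitive_on_def by blast
  then show ?thesis using ij unfolding prod_qo_def a_def b_def c_def by auto
qed

lemma index_set_eq:
  assumes ij: "i \<in> I" "j \<in> I" "i \<noteq> j"
  shows "I = {i, j}"
proof (rule ccontr)
  assume "I \<noteq> {i, j}"
  then obtain k where k: "k \<in> I" "k \<noteq> i" "k \<noteq> j" using ij by blast
  obtain e where e: "e \<in> PiE I A" using PiE_nonempty by blast
  obtain p q where pq: "(p, q) \<in> \<gamma> i" "p \<noteq> q" using factor_strict_pair ij by blast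
  obtain x y where xy: "x \<in> A j" "y \<in> A j" "(y, x) \<notin> \<gamma> j"
    using factor_incomparable_pair ij by blast
  obtain s t where st: "s \<in> A k" "t \<in> A k" "(t, s) \<notin> \<gamma> k"
    using factor_incomparable_pair k by blast
  have pqA: "p \<in> A i" "q \<in> A i" using pq factor_subset ij by auto
  \<comment> \<open>a < c by a strict step at i, while b escapes a at j and c at k\<close>
  define a where "a = e(i := p, j := y, k := s)"
  define b where "b = e(i := p, j := x, k := t)"
  define c where "c = e(i := q, j := y, k := s)"
  have P: "a \<in> PiE I A" "b \<in> PiE I A" "c \<in> PiE I A"
    unfolding a_def b_def c_def using fun_upd_in_PiE_same e ij k pqA xy st by metis+
  have "(a, c) \<in> prod_qo I A \<gamma>"
    using P e pq ij k xy st factor_refl by (auto simp: prod_qo_def a_def c_def PiE_mem)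
  moreover have "a \<noteq> c" using pq ij k unfolding a_def c_def by (metis fun_upd_apply)
  ultimately have "(a, c) \<in> prod_qo I A \<gamma> - Id" by blast
  then have "(a, b) \<in> prod_qo I A \<gamma> \<or> (b, c) \<in> prod_qo I A \<gamma>"
    using prod_cotransitive P unfolding cotransitive_on_def by blast
  moreover have "a j = y" "b j = x" "b k = t" "c k = s"
    using ij k by (simp_all add: a_def b_def c_def)
  ultimately show False using ij(2) k(1) xy(3) st(3) unfolding prod_qo_def by auto
qed

lemma factor_total:
  assumes ij: "i \<in> I" "j \<in> I" "i \<noteq> j" and pq: "p \<in> A i" "q \<in> A i"
  shows "(p, q) \<in> \<gamma> i \<or> (q, p) \<in> \<gamma> i"
proof -
  obtain u v where uv: "(u, v) \<in> \<gamma> j" "u \<noteq> v" using factor_strict_pair ij by blast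
  have uvA: "u \<in> A j" "v \<in> A j" using uv factor_subset ij by auto
  show ?thesis
    using two_coordinates_split[OF ij pq(1) pq(2) pq(1) uvA(1) uvA(1) uvA(2)
        factor_refl[OF ij(1) pq(1)] uv(1)] uv(2)
    by blast
qed

lemma factor_between:
  assumes ij: "i \<in> I" "j \<in> I" "i \<noteq> j"
    and pq: "(p, q) \<in> \<gamma> i" "p \<noteq> q" and r: "r \<in> A i"
  shows "(p, r) \<in> \<gamma> i \<and> (r, q) \<in> \<gamma> i"
proof -
  obtain s t where st: "s \<in> A j" "t \<in> A j" "(s, t) \<notin> \<gamma> j"
    using factor_incomparable_pair ij by blast
  have pqA: "p \<in> A i" "q \<in> A i" using pq factor_subset ij by auto
  have "(p, r) \<in> \<gamma> i"
    using two_coordinates_split[OF ij pqA(1) r pqA(2) st(2) st(1) st(2)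
        pq(1) factor_refl[OF ij(2) st(2)]] pq(2) st(3)
    by blast
  moreover have "(r, q) \<in> \<gamma> i"
    using two_coordinates_split[OF ij pqA(1) r pqA(2) st(1) st(2) st(1)
        pq(1) factor_refl[OF ij(2) st(1)]] pq(2) st(3)
    by blast
  ultimately show ?thesis ..
qed

lemma factor_antisym:
  assumes ij: "i \<in> I" "j \<in> I" "i \<noteq> j"
  shows "antisym (\<gamma> i)"
proof (rule antisymI, rule ccontr)
  fix p q assume pq: "(p, q) \<in> \<gamma> i" "(q, p) \<in> \<gamma> i" "p \<noteq> q"
  have "(x, y) \<in> \<gamma> i" if "x \<in> A i" "y \<in> A i" for x y
  proof -
    have "(x, q) \<in> \<gamma> i" "(p, y) \<in> \<gamma> i" using factor_between[OF ij pq(1) pq(3)] that by auto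
    then show ?thesis using factor_trans[OF ij(1)] pq(2) by blast
  qed
  then have "\<gamma> i = A i \<times> A i" using factor_subset[OF ij(1)] by auto
  then show False using factor_nontrivial[OF ij(1)] by blast
qed

lemma factor_two_element_chain:
  assumes ij: "i \<in> I" "j \<in> I" "i \<noteq> j"
  shows "two_element_chain (A i) (\<gamma> i)"
proof -
  obtain p q where pq: "(p, q) \<in> \<gamma> i" "p \<noteq> q" using factor_strict_pair ij by blast
  have pqA: "p \<in> A i" "q \<in> A i" using pq factor_subset ij by auto
  have "A i = {p, q}"
  proof (intro equalityI subsetI)
    fix r assume r: "r \<in> A i"
    show "r \<in> {p, q}"
    proof (rule ccontr)
      assume "r \<notin> {p, q}"
      then have "r \<noteq> p" "r \<noteq> q" by auto
      have pr: "(p, r) \<in> \<gamma> i" and rq: "(r, q) \<in> \<gamma> i" using factor_between[OF ij pq r] by auto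
      have "(q, r) \<in> \<gamma> i" using factor_between[OF ij pr \<open>r \<noteq> p\<close>[symmetric] pqA(2)] by blast
      then show False using rq \<open>r \<noteq> q\<close> factor_antisym[OF ij] antisymD by metis
    qed
  qed (use pqA in auto)
  then have "card (A i) = 2" using pq by simp
  then show ?thesis
    unfolding two_element_chain_def
    using factor_quasiorder[OF ij(1)] factor_antisym[OF ij] factor_total[OF ij] by blast
qed

end

lemma two_element_chain_between:
  assumes chain: "two_element_chain A r" and xy: "(x, y) \<in> r" "x \<noteq> y" and z: "z \<in> A"
  shows "(x, z) \<in> r \<and> (z, y) \<in> r"
proof -
  have qo: "quasiorder A r" and card: "card A = 2"
    using chain unfolding two_element_chain_def by blast+
  then have "x \<in> A" "y \<in> A" using xy unfolding quasiorder_def by blast+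
  then have "z = x \<or> z = y" using card xy(2) z by (auto simp: card_2_iff)
  then show ?thesis using qo xy \<open>x \<in> A\<close> \<open>y \<in> A\<close> unfolding quasiorder_def by blast
qed

lemma half_space_prod_qo_two_chains:
  assumes I: "I = {i, j}" and chains: "\<And>k. k \<in> I \<Longrightarrow> two_element_chain (A k) (\<gamma> k)"
  shows "half_space (PiE I A) (prod_qo I A \<gamma>)"
proof -
  have qo: "\<And>k. k \<in> I \<Longrightarrow> quasiorder (A k) (\<gamma> k)"
    using chains unfolding two_element_chain_def by blast
  have "cotransitive_on (PiE I A) (prod_qo I A \<gamma> - Id)"
    unfolding cotransitive_on_def
  proof (intro ballI impI)
    fix a b c assume abc: "a \<in> PiE I A" "b \<in> PiE I A" "c \<in> PiE I A"
      and ac: "(a, c) \<in> prod_qo I A \<gamma> - Id"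
    have le: "\<And>l. l \<in> I \<Longrightarrow> (a l, c l) \<in> \<gamma> l" using ac unfolding prod_qo_def by blast
    have "a \<noteq> c" using ac by auto
    then obtain k where k: "k \<in> I" "a k \<noteq> c k" using PiE_ext[OF abc(1) abc(3)] by blast
    define m where "m = (if k = i then j else i)"
    have m: "I = {k, m}" using I k(1) by (auto simp: m_def)
    then have mI: "m \<in> I" by blast
    have "(a k, b k) \<in> \<gamma> k \<and> (b k, c k) \<in> \<gamma> k"
      using two_element_chain_between[OF chains[OF k(1)] le[OF k(1)] k(2) PiE_mem[OF abc(2) k(1)]] .
    moreover have "(a m, b m) \<in> \<gamma> m \<or> (b m, c m) \<in> \<gamma> m"
    proof (cases "a m = c m")
      case True
      have "(a m, b m) \<in> \<gamma> m \<or> (b m, a m) \<in> \<gamma> m"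
        using chains[OF mI] PiE_mem[OF abc(1) mI] PiE_mem[OF abc(2) mI]
        unfolding two_element_chain_def by blast
      then show ?thesis using True by simp
    next
      case False
      then show ?thesis
        using two_element_chain_between[OF chains[OF mI] le[OF mI] False PiE_mem[OF abc(2) mI]] by blast
    qed
    ultimately have "(\<forall>l\<in>I. (a l, b l) \<in> \<gamma> l) \<or> (\<forall>l\<in>I. (b l, c l) \<in> \<gamma> l)"
      using m by auto
    then have "(a, b) \<in> prod_qo I A \<gamma> \<or> (b, c) \<in> prod_qo I A \<gamma>"
      using abc by (auto simp: prod_qo_def)
    then show "(a, b) \<in> prod_qo I A \<gamma> - Id \<or> (b, c) \<in> prod_qo I A \<gamma> - Id"
      using ac by auto
  qed
  moreover have "quasiorder (PiE I A) (prod_qo I A \<gamma>)" by (rule quasiorder_prod_qo) (rule qo)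
  ultimately show ?thesis by (simp add: half_space_iff_cotransitive_on)
qed

theorem theorem3p4:
  fixes I :: "'i set" and A :: "'i \<Rightarrow> 'a set" and \<gamma> :: "'i \<Rightarrow> ('a \<times> 'a) set"
  assumes "I \<noteq> {}"
    and "\<And>i. i \<in> I \<Longrightarrow> quasiorder (A i) (\<gamma> i)"
    and "\<And>i. i \<in> I \<Longrightarrow> Id_on (A i) \<noteq> \<gamma> i \<and> \<gamma> i \<noteq> A i \<times> A i"
  shows "half_space (PiE I A) (prod_qo I A \<gamma>) \<longleftrightarrow>
           ((\<exists>i. I = {i} \<and> half_space (A i) (\<gamma> i)) \<or>
            (card I = 2 \<and> (\<forall>i\<in>I. two_element_chain (A i) (\<gamma> i))))"
proof (cases "\<exists>i. I = {i}")
  case True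
  then obtain i where I: "I = {i}" by blast
  have "quasiorder (A i) (\<gamma> i)" using assms(2) I by simp
  from half_space_prod_qo_singleton[where A = A and \<gamma> = \<gamma>, OF this] show ?thesis using I by auto
next
  case False
  then obtain i j where ij: "i \<in> I" "j \<in> I" "i \<noteq> j" using assms(1) by blast
  have "half_space (PiE I A) (prod_qo I A \<gamma>) \<longleftrightarrow>
      card I = 2 \<and> (\<forall>k\<in>I. two_element_chain (A k) (\<gamma> k))"
  proof
    assume "half_space (PiE I A) (prod_qo I A \<gamma>)"
    then interpret half_space_product I A \<gamma> by unfold_locales (use assms in auto)
    have "I = {i, j}" by (rule index_set_eq[OF ij])
    then show "card I = 2 \<and> (\<forall>k\<in>I. two_element_chain (A k) (\<gamma> k))"
      using factor_two_element_chain ij by auto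
  next
    assume chains: "card I = 2 \<and> (\<forall>k\<in>I. two_element_chain (A k) (\<gamma> k))"
    then obtain k m where km: "I = {k, m}" unfolding card_2_iff by blast
    show "half_space (PiE I A) (prod_qo I A \<gamma>)"
      by (rule half_space_prod_qo_two_chains[OF km]) (use chains in blast)
  qed
  then show ?thesis using False by blast
qed

end
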